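(* If a set $A\subset\mathbb{N}$ has positive upper logarithmic density, i.e. $\limsup_{x\to\infty}\frac{1}{\log x}\sum_{n\in A,\,n\le x}\frac1n>0$, then $A$ contains an infinite L-divisibility chain.
   Context: For an integer $a>1$ let $P(a)$ denote its largest prime factor, and define the set of L-multiples $\mathrm{L}_a=\{ba: b\in\mathbb{N},\ \text{every prime } p\mid b \text{ satisfies } p\ge P(a)\}$ (so $a\in\mathrm{L}_a$, taking $b=1$). An infinite sequence of integers $1<d_1<d_2<\cdots$ is an L-divisibility chain if $d_{j+1}\in\mathrm{L}_{d_j}$ for all $j\ge1$. *)

theory Defs
  imports "HOL-Analysis.Analysis" "HOL-Computational_Algebra.Primes"
begin

definition lpf :: "nat \<Rightarrow> nat" where
  "lpf a = Max (prime_factors a)"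

definition Lmult :: "nat \<Rightarrow> nat set" where
  "Lmult a = {b * a | b. b \<ge> 1 \<and> (\<forall>p. prime p \<longrightarrow> p dvd b \<longrightarrow> p \<ge> lpf a)}"

definition L_chain :: "(nat \<Rightarrow> nat) \<Rightarrow> bool" where
  "L_chain d \<longleftrightarrow> 1 < d 0 \<and> strict_mono d \<and> (\<forall>j. d (Suc j) \<in> Lmult (d j))"

definition upper_log_density :: "nat set \<Rightarrow> ereal" where
  "upper_log_density A =
     Limsup at_top (\<lambda>x::real. ereal ((1 / ln x) * (\<Sum>n\<in>{n\<in>A. 1 \<le> n \<and> real n \<le> x}. 1 / real n)))"

end

(*
  For c >= 1 let L(c) be the set of L-multiples of c and w(c) = rho(P(c)) / c, where
  rho(p) = prod_{q < p prime} (1 - 1/q) is the density of the integers without prime factors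
  below p; thus w(c) is the density of L(c). Since rho(p) / p = rho(p) - rho(p') for consecutive
  primes p < p', the weights of any antichain of L-multiples of c add up to at most w(c).
  Chebyshev's bound prod_{p <= n} p <= 4^n yields Mertens' estimates, hence
  rho(p) log p >= kappa > 0, and this bounds sum_{n in L(c), n <= N} 1/n by
  w(c) (1 + log N) / kappa.

  Call B null if it has logarithmic density zero. Suppose the part of A in L(c) is not null,
  but the part of A in L(a) is null for every proper L-multiple a of c lying in A. The
  L-minimal elements of this set of proper L-multiples form an antichain, so their weights are
  summable: finitely many of them carry null sets, and the L-multiples of all the others have
  logarithmic density as small as we like, a contradiction. Hence some proper L-multiple a of c
  in A inherits the property of c, and iterating from c = 1 gives the chain.
*)
theory Submission
  imports Defs
begin

section \<open>Chebyshev's bound and Mertens' estimates\<close>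

definition primes_le :: "nat \<Rightarrow> nat set" where
  "primes_le n = {p. prime p \<and> p \<le> n}"

lemma finite_primes_le [simp]: "finite (primes_le n)"
  unfolding primes_le_def by auto

lemma primes_le_Suc:
  "primes_le (Suc n) = (if prime (Suc n) then insert (Suc n) (primes_le n) else primes_le n)"
  unfolding primes_le_def by (auto simp: le_Suc_eq)

lemma primes_le_eq_empty: "n \<le> 1 \<Longrightarrow> primes_le n = {}"
  unfolding primes_le_def by (auto dest: prime_ge_2_nat)

lemma prod_primes_dvd:
  fixes C :: nat
  assumes "finite S" "\<And>q. q \<in> S \<Longrightarrow> prime q" "\<And>q. q \<in> S \<Longrightarrow> q dvd C"
  shows "\<Prod>S dvd C"
  using assms
proof (induction S rule: finite_induct)
  case (insert q S)
  have "coprime q (\<Prod>S)"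
    using insert by (intro prod_coprime_right primes_coprime) auto
  with insert show ?case by (simp add: divides_mult)
qed simp

lemma binomial_middle_le_four_pow: "(2*m+1) choose m \<le> 4^m"
proof -
  have "2 * ((2*m+1) choose m) = ((2*m+1) choose m) + ((2*m+1) choose (m+1))"
    using binomial_symmetric[of m "2*m+1"] by simp
  also have "\<dots> = (\<Sum>k\<in>{m, m+1}. (2*m+1) choose k)"
    by simp
  also have "\<dots> \<le> (\<Sum>k\<le>2*m+1. (2*m+1) choose k)"
    by (intro sum_mono2) auto
  also have "\<dots> = 2 * 4^m"
    by (simp only: choose_row_sum) (simp add: power_mult)
  finally show ?thesis by simp
qed

lemma prod_middle_primes_dvd_binomial:
  "\<Prod>{p. prime p \<and> m+1 < p \<and> p \<le> 2*m+1} dvd (2*m+1) choose m"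
proof (rule prod_primes_dvd)
  fix p assume p: "p \<in> {p. prime p \<and> m+1 < p \<and> p \<le> 2*m+1}"
  then have "prime p" by simp
  have "fact m * fact (m+1) * ((2*m+1) choose m) = (fact (2*m+1) :: nat)"
    using binomial_fact_lemma[of m "2*m+1"] by (simp add: Suc_diff_le)
  moreover have "p dvd fact (2*m+1)" "\<not> p dvd fact m" "\<not> p dvd fact (m+1)"
    using p by (simp_all only: prime_dvd_fact_iff[OF \<open>prime p\<close>]) auto
  ultimately show "p dvd (2*m+1) choose m"
    by (metis \<open>prime p\<close> prime_dvd_mult_iff)
qed auto

lemma primorial_le_four_pow: "\<Prod>(primes_le n) \<le> 4^n"
proof (induction n rule: less_induct)
  case (less n)
  have "n \<le> 1 \<or> n = 2 \<or> (n > 2 \<and> even n) \<or> (\<exists>m. n = 2*m+1 \<and> m \<ge> 1)"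
    by presburger
  then consider "n \<le> 1" | "n = 2" | "n > 2" "even n" | m where "n = 2*m+1" "m \<ge> 1"
    by blast
  then show ?case
  proof cases
    case 1
    then show ?thesis by (simp add: primes_le_eq_empty)
  next
    case 2
    then have "primes_le n = {2}"
      unfolding primes_le_def by (auto dest: prime_ge_2_nat)
    with 2 show ?thesis by simp
  next
    case 3
    then have "\<not> prime n" "n = Suc (n - 1)"
      using prime_odd_nat by auto
    then have "primes_le n = primes_le (n - 1)"
      by (metis primes_le_Suc)
    then have "\<Prod>(primes_le n) \<le> 4^(n-1)" using less[of "n-1"] 3 by simp
    also have "\<dots> \<le> 4^n" by (intro power_increasing) auto
    finally show ?thesis .
  next
    case 4
    define M where "M = {p. prime p \<and> m+1 < p \<and> p \<le> 2*m+1}"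
    have "primes_le n = primes_le (m+1) \<union> M" "primes_le (m+1) \<inter> M = {}"
      unfolding primes_le_def M_def 4 by auto
    then have "\<Prod>(primes_le n) = \<Prod>(primes_le (m+1)) * \<Prod>M"
      by (simp add: M_def prod.union_disjoint)
    also have "\<dots> \<le> 4^(m+1) * 4^m"
    proof (rule mult_le_mono)
      show "\<Prod>(primes_le (m+1)) \<le> 4^(m+1)" using less[of "m+1"] 4 by simp
      have "\<Prod>M \<le> (2*m+1) choose m"
        unfolding M_def by (rule dvd_imp_le[OF prod_middle_primes_dvd_binomial]) simp
      then show "\<Prod>M \<le> 4^m" using binomial_middle_le_four_pow order_trans by blast
    qed
    also have "\<dots> = 4^n" by (simp add: 4 power_add[symmetric])
    finally show ?thesis .
  qed
qed

lemma sum_ln_le_ln_if_prod_le: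
  fixes S :: "nat set"
  assumes "finite S" "0 \<notin> S" "\<Prod>S \<le> m"
  shows "(\<Sum>q\<in>S. ln (real q)) \<le> ln (real m)"
proof -
  have pos: "\<And>q. q \<in> S \<Longrightarrow> real q > 0"
    using assms(2) by (metis of_nat_0_less_iff not_gr0)
  have "real (\<Prod>S) \<le> real m"
    using assms(3) of_nat_le_iff by blast
  then have "(\<Prod>q\<in>S. real q) \<le> real m"
    by simp
  moreover have "(\<Prod>q\<in>S. real q) > 0"
    using pos by (rule prod_pos)
  ultimately have "ln (\<Prod>q\<in>S. real q) \<le> ln (real m)"
    by simp
  then show ?thesis
    using assms(1) pos by (simp add: ln_prod)
qed

lemma chebyshev_theta_le: "(\<Sum>p\<in>primes_le n. ln (real p)) \<le> real n * ln 4"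
proof -
  have "(\<Sum>p\<in>primes_le n. ln (real p)) \<le> ln (real (4 ^ n))"
    using primorial_le_four_pow by (intro sum_ln_le_ln_if_prod_le) (auto simp: primes_le_def)
  then show ?thesis
    by (simp add: ln_realpow)
qed

lemma sum_ln_prime_factors_le:
  assumes "m \<ge> 1"
  shows "(\<Sum>q\<in>prime_factors m. ln (real q)) \<le> ln (real m)"
proof (rule sum_ln_le_ln_if_prod_le)
  show "\<Prod>(prime_factors m) \<le> m"
    using assms by (intro dvd_imp_le prod_primes_dvd) (auto simp: in_prime_factors_iff)
qed auto

lemma card_multiples_ge:
  assumes "q > 0"
  shows "n div q \<le> card {m\<in>{1..n}. q dvd m}"
proof -
  have "(\<lambda>j. j * q) ` {1..n div q} \<subseteq> {m\<in>{1..n}. q dvd m}"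
    using assms by (auto simp: less_eq_div_iff_mult_less_eq)
  then have "card ((\<lambda>j. j * q) ` {1..n div q}) \<le> card {m\<in>{1..n}. q dvd m}"
    by (intro card_mono) auto
  moreover have "inj_on (\<lambda>j. j * q) {1..n div q}"
    using assms by (auto simp: inj_on_def)
  ultimately show ?thesis
    by (simp add: card_image)
qed

lemma sum_primes_ln_card_multiples_le:
  "(\<Sum>q\<in>primes_le n. ln (real q) * card {m\<in>{1..n}. q dvd m}) \<le> real n * ln (real n)"
proof -
  have prime_factors_eq: "prime_factors m = {q\<in>primes_le n. q dvd m}" if "m \<in> {1..n}" for m
  proof -
    have "q \<le> n" if "q dvd m" for q
      using that \<open>m \<in> {1..n}\<close> dvd_imp_le[of q m] by auto
    then show ?thesis
      using that by (auto simp: primes_le_def in_prime_factors_iff)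
  qed
  have "(\<Sum>q\<in>primes_le n. ln (real q) * card {m\<in>{1..n}. q dvd m})
      = (\<Sum>q\<in>primes_le n. \<Sum>m\<in>{m\<in>{1..n}. q dvd m}. ln (real q))"
    by (simp add: mult.commute)
  also have "\<dots> = (\<Sum>m\<in>{1..n}. \<Sum>q\<in>{q\<in>primes_le n. q dvd m}. ln (real q))"
    by (rule sum.swap_restrict[symmetric]) auto
  also have "\<dots> = (\<Sum>m\<in>{1..n}. \<Sum>q\<in>prime_factors m. ln (real q))"
    by (intro sum.cong) (auto simp: prime_factors_eq)
  also have "\<dots> \<le> (\<Sum>m\<in>{1..n}. ln (real n))"
    by (intro sum_mono order.trans[OF sum_ln_prime_factors_le]) auto
  also have "\<dots> = real n * ln (real n)"
    by simp
  finally show ?thesis .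
qed

lemma mertens_first:
  assumes "n \<ge> 1"
  shows "(\<Sum>p\<in>primes_le n. ln (real p) / real p) \<le> ln (real n) + ln 4"
proof -
  have multiples: "real n / real q \<le> card {m\<in>{1..n}. q dvd m} + 1" if "q \<in> primes_le n" for q
  proof -
    have "q > 0"
      using that by (auto simp: primes_le_def prime_gt_0_nat)
    have "n < n div q * q + q"
      using div_mult_mod_eq[of n q] mod_less_divisor[OF \<open>q > 0\<close>, of n] by linarith
    then have "n < (n div q + 1) * q"
      by simp
    then have "real n < real (n div q + 1) * real q"
      by (simp only: of_nat_less_iff flip: of_nat_mult)
    then have "real n / real q < real (n div q + 1)"
      using \<open>q > 0\<close> by (simp add: divide_less_eq)
    then show ?thesis
      using card_multiples_ge[OF \<open>q > 0\<close>, of n] by linarith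
  qed
  have "real n * (\<Sum>p\<in>primes_le n. ln (real p) / real p)
      = (\<Sum>p\<in>primes_le n. ln (real p) * (real n / real p))"
    by (simp add: sum_distrib_left ac_simps)
  also have "\<dots> \<le> (\<Sum>p\<in>primes_le n. ln (real p) * (card {m\<in>{1..n}. p dvd m} + 1))"
    using multiples
    by (intro sum_mono mult_left_mono)
      (auto simp: primes_le_def intro!: ln_ge_zero dest: prime_ge_1_nat)
  also have "\<dots> = (\<Sum>p\<in>primes_le n. ln (real p) * card {m\<in>{1..n}. p dvd m})
      + (\<Sum>p\<in>primes_le n. ln (real p))"
    by (simp add: distrib_left sum.distrib)
  also have "\<dots> \<le> real n * (ln (real n) + ln 4)"
    using sum_primes_ln_card_multiples_le[of n] chebyshev_theta_le[of n] by (simp add: distrib_left)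
  finally show ?thesis
    using assms by simp
qed

definition prime_recip_sum :: "nat \<Rightarrow> real" where
  "prime_recip_sum N = (\<Sum>p\<in>primes_le N. 1 / real p)"

definition mertens_sum :: "nat \<Rightarrow> real" where
  "mertens_sum N = (\<Sum>p\<in>primes_le N. ln (real p) / real p)"

text \<open>Summation by parts in disguise: a prime \<open>p = N + 1\<close> raises \<open>prime_recip_sum\<close> by
  \<open>(ln p / p) / ln p\<close> and lowers the correction term by the same amount, so the potential
  changes only through the denominator \<open>ln N\<close>, and by \<open>mertens_first\<close> this change is
  dominated by the increment of \<open>ln (ln N)\<close>.\<close>
definition mertens_potential :: "nat \<Rightarrow> real" where
  "mertens_potential N =
     prime_recip_sum N + (ln 4 - mertens_sum N) / ln (real N) - ln (ln (real N))"

lemma prime_recip_sum_mertens_sum_Suc: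
  fixes N :: nat
  defines "t \<equiv> if prime (Suc N) then 1 / real (Suc N) else 0"
  shows "prime_recip_sum (Suc N) = prime_recip_sum N + t"
    and "mertens_sum (Suc N) = mertens_sum N + t * ln (real (Suc N))"
proof -
  have "Suc N \<notin> primes_le N"
    unfolding primes_le_def by simp
  then show "prime_recip_sum (Suc N) = prime_recip_sum N + t"
    and "mertens_sum (Suc N) = mertens_sum N + t * ln (real (Suc N))"
    unfolding prime_recip_sum_def mertens_sum_def t_def primes_le_Suc by simp_all
qed

lemma one_minus_ratio_le_ln_diff:
  fixes u v :: real
  assumes "0 < v" "v \<le> u"
  shows "1 - v / u \<le> ln u - ln v"
proof -
  have "ln (v / u) \<le> v / u - 1"
    using assms by (intro ln_le_minus_one) simp
  then show ?thesis
    using assms by (simp add: ln_div)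
qed

lemma mertens_potential_Suc_le:
  assumes "N \<ge> 2"
  shows "mertens_potential (Suc N) \<le> mertens_potential N"
proof -
  define t where "t = (if prime (Suc N) then 1 / real (Suc N) else 0)"
  define u where "u = ln (real (Suc N))"
  define v where "v = ln (real N)"
  define D where "D = mertens_sum N - ln 4"
  have "0 < v" "v \<le> u"
    using assms by (simp_all add: u_def v_def)
  have "D \<le> v"
    using mertens_first[of N] assms by (simp add: D_def v_def mertens_sum_def)
  have "mertens_potential (Suc N)
      = prime_recip_sum N + t + (ln 4 - mertens_sum N - t * u) / u - ln u"
    unfolding mertens_potential_def prime_recip_sum_mertens_sum_Suc[of N, folded t_def] u_def
    by (simp add: algebra_simps)
  also have "\<dots> = prime_recip_sum N + (ln 4 - mertens_sum N) / u - ln u"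
    using \<open>0 < v\<close> \<open>v \<le> u\<close> by (simp add: diff_divide_distrib)
  finally have potential_Suc: "mertens_potential (Suc N) = \<dots>" .
  have potential: "mertens_potential N = prime_recip_sum N + (ln 4 - mertens_sum N) / v - ln v"
    unfolding mertens_potential_def v_def ..
  have "mertens_potential (Suc N) - mertens_potential N = D * (1 / v - 1 / u) - (ln u - ln v)"
    unfolding potential_Suc potential D_def using \<open>0 < v\<close> \<open>v \<le> u\<close> by (simp add: field_simps)
  also have "\<dots> \<le> v * (1 / v - 1 / u) - (ln u - ln v)"
    using \<open>D \<le> v\<close> \<open>0 < v\<close> \<open>v \<le> u\<close> by (intro diff_right_mono mult_right_mono) (simp_all add: frac_le)
  also have "\<dots> = (1 - v / u) - (ln u - ln v)"
    using \<open>0 < v\<close> by (simp add: field_simps)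
  also have "\<dots> \<le> 0"
    using one_minus_ratio_le_ln_diff[OF \<open>0 < v\<close> \<open>v \<le> u\<close>] by simp
  finally show ?thesis
    by simp
qed

lemma mertens_potential_le: "N \<ge> 2 \<Longrightarrow> mertens_potential N \<le> mertens_potential 2"
proof (induction N rule: dec_induct)
  case (step n)
  then show ?case
    using mertens_potential_Suc_le[of n] by simp
qed simp

lemma prime_recip_sum_le:
  assumes "N \<ge> 2"
  shows "prime_recip_sum N \<le> ln (ln (real N)) + mertens_potential 2 + 1"
proof -
  have "0 < ln (real N)"
    using assms by simp
  moreover have "mertens_sum N - ln 4 \<le> ln (real N)"
    using mertens_first[of N] assms by (simp add: mertens_sum_def)
  ultimately have "(ln 4 - mertens_sum N) / ln (real N) \<ge> -1"
    by (simp add: field_simps)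
  then show ?thesis
    using mertens_potential_le[OF assms] unfolding mertens_potential_def by linarith
qed

section \<open>The density of rough numbers\<close>

definition rough_density :: "nat \<Rightarrow> real" where
  "rough_density p = (\<Prod>q\<in>{q. prime q \<and> q < p}. 1 - 1 / real q)"

lemma one_minus_inverse_prime_pos: "prime q \<Longrightarrow> 0 < 1 - 1 / real q"
  using prime_ge_2_nat[of q] by (simp add: field_simps)

lemma rough_density_pos: "rough_density p > 0"
  unfolding rough_density_def by (intro prod_pos one_minus_inverse_prime_pos) simp

lemma ln_one_minus_inverse_ge:
  fixes x :: real
  assumes "x > 1"
  shows "- 1 / (x - 1) \<le> ln (1 - 1 / x)"
proof -
  have "ln (x / (x - 1)) \<le> x / (x - 1) - 1"
    using assms by (intro ln_le_minus_one) simp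
  moreover have "1 - 1 / x = (x - 1) / x" "x / (x - 1) - 1 = 1 / (x - 1)"
    using assms by (simp_all add: field_simps)
  ultimately show ?thesis
    using assms by (simp add: ln_div)
qed

lemma sum_inverse_pronic:
  "M \<ge> 1 \<Longrightarrow> (\<Sum>k=2..M. 1 / (real k * (real k - 1))) = 1 - 1 / real M"
proof (induction M rule: dec_induct)
  case (step n)
  have "{2..Suc n} = insert (Suc n) {2..n}"
    using step by auto
  then have "(\<Sum>k=2..Suc n. 1 / (real k * (real k - 1)))
      = 1 / (real (Suc n) * real n) + (\<Sum>k=2..n. 1 / (real k * (real k - 1)))"
    by simp
  also have "\<dots> = 1 / (real (Suc n) * real n) + (1 - 1 / real n)"
    by (simp only: step.IH)
  also have "\<dots> = 1 - 1 / real (Suc n)"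
  proof -
    have "real n > 0"
      using \<open>n \<ge> 1\<close> by simp
    then have "real n + real n * real n > 0"
      by (intro add_pos_pos mult_pos_pos)
    with \<open>real n > 0\<close> show ?thesis
      by (simp add: field_simps)
  qed
  finally show ?case .
qed simp

lemma sum_primes_inverse_pronic_le: "(\<Sum>q\<in>primes_le M. 1 / (real q * (real q - 1))) \<le> 1"
proof (cases "M \<ge> 1")
  case True
  have "primes_le M \<subseteq> {2..M}"
    unfolding primes_le_def by (auto dest: prime_ge_2_nat)
  then have "(\<Sum>q\<in>primes_le M. 1 / (real q * (real q - 1))) \<le> (\<Sum>k=2..M. 1 / (real k * (real k - 1)))"
    by (intro sum_mono2) auto
  also have "\<dots> \<le> 1"
    using sum_inverse_pronic[OF True] by simp
  finally show ?thesis .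
qed (simp add: primes_le_eq_empty)

lemma ln_rough_density_ge:
  assumes "prime p" "p \<ge> 3"
  shows "ln (rough_density p) \<ge> - ln (ln (real p)) - mertens_potential 2 - 2"
proof -
  have primes_below: "{q. prime q \<and> q < p} = primes_le (p - 1)"
    unfolding primes_le_def using assms by auto
  have inverse_split: "1 / (real q - 1) = 1 / real q + 1 / (real q * (real q - 1))"
    if "q \<in> primes_le (p - 1)" for q
    using that prime_ge_2_nat[of q] by (simp add: primes_le_def field_simps)
  have "ln (rough_density p) = (\<Sum>q\<in>primes_le (p - 1). ln (1 - 1 / real q))"
    unfolding rough_density_def primes_below
    by (rule ln_prod) (auto simp: primes_le_def dest: one_minus_inverse_prime_pos)
  also have "\<dots> \<ge> (\<Sum>q\<in>primes_le (p - 1). - 1 / (real q - 1))"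
    by (intro sum_mono ln_one_minus_inverse_ge) (auto simp: primes_le_def dest: prime_ge_2_nat)
  finally have "ln (rough_density p)
      \<ge> - prime_recip_sum (p - 1) - (\<Sum>q\<in>primes_le (p - 1). 1 / (real q * (real q - 1)))"
    unfolding prime_recip_sum_def by (simp add: inverse_split sum_subtractf sum_negf)
  moreover have "prime_recip_sum (p - 1) \<le> ln (ln (real (p - 1))) + mertens_potential 2 + 1"
    using assms by (intro prime_recip_sum_le) simp
  moreover have "ln (ln (real (p - 1))) \<le> ln (ln (real p))"
    using assms by simp
  ultimately show ?thesis
    using sum_primes_inverse_pronic_le[of "p - 1"] by linarith
qed

lemma rough_density_ln_lower: "\<exists>\<kappa>>0. \<forall>p. prime p \<longrightarrow> \<kappa> \<le> rough_density p * ln (real p)"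
proof (intro exI conjI allI impI)
  define \<kappa> where "\<kappa> = min (exp (- mertens_potential 2 - 2)) (ln 2)"
  show "\<kappa> > 0"
    unfolding \<kappa>_def by simp
  fix p :: nat
  assume "prime p"
  show "\<kappa> \<le> rough_density p * ln (real p)"
  proof (cases "p = 2")
    case True
    then have "{q. prime q \<and> q < p} = {}"
      by (auto dest: prime_ge_2_nat)
    then have "rough_density p = 1"
      unfolding rough_density_def by (simp only: prod.empty)
    then show ?thesis
      using True by (simp add: \<kappa>_def)
  next
    case False
    then have "p \<ge> 3" "ln (real p) > 0"
      using prime_ge_2_nat[OF \<open>prime p\<close>] by auto
    have "exp (- mertens_potential 2 - 2)
        = exp (ln (ln (real p))) * exp (- ln (ln (real p)) - mertens_potential 2 - 2)"
      by (simp flip: exp_add)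
    also have "\<dots> \<le> ln (real p) * exp (ln (rough_density p))"
      using ln_rough_density_ge[OF \<open>prime p\<close> \<open>p \<ge> 3\<close>] \<open>ln (real p) > 0\<close> by simp
    also have "\<dots> = rough_density p * ln (real p)"
      using rough_density_pos by simp
    finally show ?thesis
      unfolding \<kappa>_def by simp
  qed
qed

lemma rough_density_Suc:
  "rough_density (Suc N) =
    (if prime N then rough_density N * (1 - 1 / real N) else rough_density N)"
proof -
  have "{q. prime q \<and> q < Suc N} =
      (if prime N then insert N {q. prime q \<and> q < N} else {q. prime q \<and> q < N})"
    by (auto simp: less_Suc_eq)
  then show ?thesis
    unfolding rough_density_def by (simp add: mult.commute)
qed

lemma sum_rough_density_telescope:
  "r \<le> N \<Longrightarrow>
    (\<Sum>p\<in>{p. prime p \<and> r \<le> p \<and> p < N}. rough_density p / real p) = rough_density r - rough_density N"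
proof (induction N rule: dec_induct)
  case base
  have "{p. prime p \<and> r \<le> p \<and> p < r} = {}"
    by auto
  then show ?case
    by (simp only: sum.empty diff_self)
next
  case (step n)
  have primes_Suc: "{p. prime p \<and> r \<le> p \<and> p < Suc n} =
      (if prime n then insert n {p. prime p \<and> r \<le> p \<and> p < n} else {p. prime p \<and> r \<le> p \<and> p < n})"
    using step(1) by (auto simp: less_Suc_eq)
  show ?case
  proof (cases "prime n")
    case True
    then have "(\<Sum>p\<in>{p. prime p \<and> r \<le> p \<and> p < Suc n}. rough_density p / real p)
        = rough_density n / real n + (rough_density r - rough_density n)"
      unfolding primes_Suc using step.IH by simp
    also have "\<dots> = rough_density r - rough_density (Suc n)"
      unfolding rough_density_Suc using True by (simp add: algebra_simps)
    finally show ?thesis .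
  qed (use step.IH primes_Suc rough_density_Suc in simp)
qed

lemma sum_rough_density_le:
  assumes "finite P" "\<And>p. p \<in> P \<Longrightarrow> prime p \<and> r \<le> p"
  shows "(\<Sum>p\<in>P. rough_density p / real p) \<le> rough_density r"
proof -
  obtain M where "\<forall>p\<in>P. p < M"
    using assms(1) finite_nat_set_iff_bounded by blast
  then obtain N where N: "\<And>p. p \<in> P \<Longrightarrow> p < N" "r \<le> N"
    by (metis max.cobounded1 max.cobounded2 order.strict_trans2)
  have "(\<Sum>p\<in>P. rough_density p / real p)
      \<le> (\<Sum>p\<in>{p. prime p \<and> r \<le> p \<and> p < N}. rough_density p / real p)"
    using assms N by (intro sum_mono2) (auto simp: rough_density_pos less_imp_le)
  also have "\<dots> = rough_density r - rough_density N"
    using N(2) by (rule sum_rough_density_telescope)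
  also have "\<dots> \<le> rough_density r"
    using rough_density_pos[of N] by simp
  finally show ?thesis .
qed

section \<open>L-multiples and their weights\<close>

definition rough :: "nat \<Rightarrow> nat \<Rightarrow> bool" where
  "rough r m \<longleftrightarrow> (\<forall>q. prime q \<longrightarrow> q dvd m \<longrightarrow> r \<le> q)"

text \<open>\<open>lpf 1 = Max {}\<close> is unspecified; the value 2 for \<open>c \<le> 1\<close> makes \<open>Lmultiples 1\<close> the set
  of all positive integers.\<close>
definition top_prime :: "nat \<Rightarrow> nat" where
  "top_prime c = (if c \<le> 1 then 2 else lpf c)"

definition Lmultiples :: "nat \<Rightarrow> nat set" where
  "Lmultiples c = {c * m | m. m \<ge> 1 \<and> rough (top_prime c) m}"

lemma rough_one [simp]: "rough r 1"
  unfolding rough_def by auto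

lemma rough_mult: "rough r a \<Longrightarrow> rough r b \<Longrightarrow> rough r (a * b)"
  unfolding rough_def by (auto simp: prime_dvd_mult_iff)

lemma rough_antimono: "rough r a \<Longrightarrow> r' \<le> r \<Longrightarrow> rough r' a"
  unfolding rough_def using le_trans by blast

lemma lpf_in_prime_factors: "c > 1 \<Longrightarrow> lpf c \<in> prime_factors c"
  unfolding lpf_def by (rule Max_in) (auto simp: prime_factorization_empty_iff)

lemma prime_dvd_le_lpf: "c > 0 \<Longrightarrow> prime q \<Longrightarrow> q dvd c \<Longrightarrow> q \<le> lpf c"
  unfolding lpf_def by (rule Max_ge) (auto simp: in_prime_factors_iff)

lemma prime_top_prime: "prime (top_prime c)"
  unfolding top_prime_def using lpf_in_prime_factors[of c] by auto

lemma top_prime_le: "c > 1 \<Longrightarrow> top_prime c \<le> c"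
  unfolding top_prime_def using lpf_in_prime_factors[of c] by (auto intro: dvd_imp_le)

lemma top_prime_mult_prime:
  assumes "c \<ge> 1" "prime p" "top_prime c \<le> p"
  shows "top_prime (c * p) = p"
proof -
  have "c * p > 1"
    using assms prime_gt_1_nat[of p] by (simp add: less_le_trans)
  then have q: "prime (lpf (c * p))" "lpf (c * p) dvd c * p"
    using lpf_in_prime_factors by auto
  have "lpf (c * p) \<le> p"
  proof (cases "lpf (c * p) dvd p")
    case True
    then show ?thesis
      using primes_dvd_imp_eq[OF q(1) assms(2)] by simp
  next
    case False
    then have "lpf (c * p) dvd c"
      using q prime_dvd_mult_iff by blast
    moreover from this have "c > 1"
      using q(1) assms(1) by (cases "c = 1") auto
    ultimately have "lpf (c * p) \<le> top_prime c"
      using q(1) prime_dvd_le_lpf[of c] by (simp add: top_prime_def)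
    then show ?thesis
      using assms(3) by simp
  qed
  moreover have "p \<le> lpf (c * p)"
    using prime_dvd_le_lpf[OF less_trans[OF zero_less_one \<open>c * p > 1\<close>] assms(2)] by simp
  ultimately show ?thesis
    using \<open>c * p > 1\<close> by (simp add: top_prime_def)
qed

lemma Lmultiples_eq_Lmult: "c > 1 \<Longrightarrow> Lmultiples c = Lmult c"
  unfolding Lmultiples_def Lmult_def rough_def top_prime_def by (auto simp: mult.commute)

lemma Lmultiples_one: "Lmultiples 1 = {n. n \<ge> 1}"
  unfolding Lmultiples_def rough_def top_prime_def by (auto dest: prime_ge_2_nat)

lemma self_in_Lmultiples: "c \<in> Lmultiples c"
proof -
  have "c = c * 1 \<and> (1::nat) \<ge> 1 \<and> rough (top_prime c) 1"
    using rough_one[of "top_prime c"] by simp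
  then show ?thesis
    unfolding Lmultiples_def by blast
qed

lemma Lmultiples_ge: "n \<in> Lmultiples c \<Longrightarrow> c \<le> n"
  unfolding Lmultiples_def by auto

lemma Lmultiples_less:
  assumes "a \<in> Lmultiples b" "a \<noteq> b"
  shows "b < a"
proof -
  obtain m where "a = b * m" "m \<ge> 1"
    using assms(1) unfolding Lmultiples_def by blast
  with assms(2) have "m \<ge> 2" "b > 0"
    by auto
  with \<open>a = b * m\<close> show ?thesis
    by simp
qed

lemma top_prime_mono:
  assumes "b \<in> Lmultiples a" "a \<ge> 1"
  shows "top_prime a \<le> top_prime b"
proof -
  obtain m where m: "b = a * m" "m \<ge> 1"
    using assms(1) unfolding Lmultiples_def by blast
  show ?thesis
  proof (cases "a = 1")
    case True
    then show ?thesis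
      using prime_top_prime[of b] by (simp add: top_prime_def prime_ge_2_nat)
  next
    case False
    moreover have "a \<le> b"
      using m by simp
    ultimately have "a > 1" "b > 1"
      using assms(2) by simp_all
    moreover have "prime (lpf a)" "lpf a dvd b"
      using lpf_in_prime_factors[OF \<open>a > 1\<close>] m by auto
    ultimately show ?thesis
      using prime_dvd_le_lpf[of b "lpf a"] by (simp add: top_prime_def)
  qed
qed

lemma Lmultiples_trans:
  assumes "b \<in> Lmultiples a" "c \<in> Lmultiples b" "a \<ge> 1"
  shows "c \<in> Lmultiples a"
proof -
  obtain m where m: "b = a * m" "m \<ge> 1" "rough (top_prime a) m"
    using assms(1) unfolding Lmultiples_def by blast
  obtain m' where m': "c = b * m'" "m' \<ge> 1" "rough (top_prime b) m'"
    using assms(2) unfolding Lmultiples_def by blast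
  have "rough (top_prime a) (m * m')"
    using m(3) rough_antimono[OF m'(3) top_prime_mono[OF assms(1,3)]] by (rule rough_mult)
  moreover have "c = a * (m * m')" "m * m' \<ge> 1"
    using m m' by simp_all
  ultimately show ?thesis
    unfolding Lmultiples_def by blast
qed

definition spf :: "nat \<Rightarrow> nat" where
  "spf m = Min (prime_factors m)"

lemma spf_in_prime_factors: "m > 1 \<Longrightarrow> spf m \<in> prime_factors m"
  unfolding spf_def by (rule Min_in) (auto simp: prime_factorization_empty_iff)

lemma rough_spf_cofactor:
  assumes "m = spf m * m'" "m > 1"
  shows "rough (spf m) m'"
proof -
  have "q dvd m" if "q dvd m'" for q
    using that assms(1) by (metis dvd_mult)
  with assms(2) show ?thesis
    unfolding rough_def spf_def by (auto intro!: Min_le simp: in_prime_factors_iff)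
qed

lemma Lmultiples_descend:
  assumes "a \<in> Lmultiples c" "a \<noteq> c" "c \<ge> 1"
  defines "p \<equiv> spf (a div c)"
  shows "prime p" "top_prime c \<le> p" "a \<in> Lmultiples (c * p)"
proof -
  obtain m where m: "a = c * m" "m \<ge> 1" "rough (top_prime c) m"
    using assms(1) unfolding Lmultiples_def by blast
  then have "m > 1" "p = spf m"
    using assms(2,3) by (auto simp: le_less p_def)
  then have "prime p" "p dvd m"
    using spf_in_prime_factors by auto
  then obtain m' where "m = p * m'"
    by blast
  show "prime p"
    by fact
  show "top_prime c \<le> p"
    using m(3) \<open>prime p\<close> \<open>p dvd m\<close> unfolding rough_def by blast
  have "rough p m'"
    using \<open>m = p * m'\<close> \<open>m > 1\<close> unfolding \<open>p = spf m\<close> by (rule rough_spf_cofactor)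
  moreover have "a = c * p * m'" "m' \<ge> 1"
    using m \<open>m = p * m'\<close> by auto
  ultimately show "a \<in> Lmultiples (c * p)"
    unfolding Lmultiples_def top_prime_mult_prime[OF assms(3) \<open>prime p\<close> \<open>top_prime c \<le> p\<close>]
    by blast
qed

text \<open>Because \<open>rough_density\<close> telescopes exactly over the primes, the antichain bound below
  holds without a constant factor, which is what allows the recursion over arbitrarily long
  chains of descendants.\<close>
definition weight :: "nat \<Rightarrow> real" where
  "weight c = rough_density (top_prime c) / real c"

definition L_antichain :: "nat set \<Rightarrow> bool" where
  "L_antichain F \<longleftrightarrow> (\<forall>a\<in>F. \<forall>b\<in>F. a \<in> Lmultiples b \<longrightarrow> a = b)"

lemma weight_nonneg: "weight c \<ge> 0"
  unfolding weight_def using rough_density_pos[of "top_prime c"] by simp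

lemma sum_weight_mult_primes_le:
  assumes "c \<ge> 1" "finite P" "\<And>p. p \<in> P \<Longrightarrow> prime p \<and> top_prime c \<le> p"
  shows "(\<Sum>p\<in>P. weight (c * p)) \<le> weight c"
proof -
  have "(\<Sum>p\<in>P. weight (c * p)) = (\<Sum>p\<in>P. rough_density p / real p) / real c"
    unfolding sum_divide_distrib
  proof (rule sum.cong)
    fix p
    assume "p \<in> P"
    then have "top_prime (c * p) = p"
      using assms by (intro top_prime_mult_prime) auto
    then show "weight (c * p) = rough_density p / real p / real c"
      by (simp add: weight_def mult.commute)
  qed simp
  also have "\<dots> \<le> rough_density (top_prime c) / real c"
    using assms by (intro divide_right_mono sum_rough_density_le) auto
  finally show ?thesis
    unfolding weight_def .
qed

lemma sum_weight_le_if_children_le: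
  assumes "c \<ge> 1" "finite F" "F \<subseteq> Lmultiples c" "c \<notin> F"
    and children: "\<And>p G. prime p \<Longrightarrow> top_prime c \<le> p \<Longrightarrow> G \<subseteq> F \<Longrightarrow> G \<subseteq> Lmultiples (c * p) \<Longrightarrow>
      (\<Sum>a\<in>G. weight a) \<le> weight (c * p)"
  shows "(\<Sum>a\<in>F. weight a) \<le> weight c"
proof -
  define child where "child a = spf (a div c)" for a
  have child: "prime (child a)" "top_prime c \<le> child a" "a \<in> Lmultiples (c * child a)"
    if "a \<in> F" for a
    unfolding child_def using that assms(1,3,4) Lmultiples_descend[of a c] by auto
  have "(\<Sum>a\<in>F. weight a) = (\<Sum>p\<in>child ` F. \<Sum>a\<in>{a\<in>F. child a = p}. weight a)"
    using assms(2) by (rule sum.image_gen)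
  also have "\<dots> \<le> (\<Sum>p\<in>child ` F. weight (c * p))"
    using child by (intro sum_mono children) (auto, metis)
  also have "\<dots> \<le> weight c"
    using assms(1,2) child by (intro sum_weight_mult_primes_le) auto
  finally show ?thesis .
qed

lemma sum_weight_L_antichain_le:
  assumes "c \<ge> 1" "finite F" "F \<subseteq> Lmultiples c" "L_antichain F"
  shows "(\<Sum>a\<in>F. weight a) \<le> weight c"
proof -
  obtain N where "\<forall>a\<in>F. a \<le> N"
    using assms(2) finite_nat_set_iff_bounded_le by blast
  then show ?thesis
    using assms
  proof (induction "N - c" arbitrary: c F rule: less_induct)
    case less
    show ?case
    proof (cases "c \<in> F")
      case True
      then have "F = {c}"
        using less.prems(4,5) unfolding L_antichain_def by blast
      then show ?thesis
        by simp
    next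
      case False
      show ?thesis
      proof (rule sum_weight_le_if_children_le[OF less.prems(2-4) False])
        fix p G
        assume "prime p" "top_prime c \<le> p" "G \<subseteq> F" "G \<subseteq> Lmultiples (c * p)"
        show "(\<Sum>a\<in>G. weight a) \<le> weight (c * p)"
        proof (cases "G = {}")
          case False
          then obtain a where "a \<in> G"
            by blast
          then have "c * p \<le> N"
            using Lmultiples_ge \<open>G \<subseteq> F\<close> \<open>G \<subseteq> Lmultiples (c * p)\<close> less.prems(1) by force
          moreover have "c < c * p"
            using less.prems(2) prime_gt_1_nat[OF \<open>prime p\<close>] by simp
          ultimately have "N - c * p < N - c"
            by linarith
          moreover have "L_antichain G"
            using less.prems(5) \<open>G \<subseteq> F\<close> unfolding L_antichain_def by blast
          ultimately show ?thesis
            using \<open>c < c * p\<close> \<open>G \<subseteq> F\<close> \<open>G \<subseteq> Lmultiples (c * p)\<close> less.prems(1,3)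
            by (intro less.hyps[of "c * p"]) (auto intro: finite_subset)
        qed (simp add: weight_nonneg)
      qed
    qed
  qed
qed

section \<open>Logarithmic sums over L-multiples\<close>

lemma sum_inverse_le_one_plus_ln: "K \<ge> 1 \<Longrightarrow> (\<Sum>n=1..K. 1 / real n) \<le> 1 + ln (real K)"
proof -
  assume "K \<ge> 1"
  then obtain k where "K = Suc k"
    using not0_implies_Suc by fastforce
  have "harm (Suc k) - ln (real (Suc k)) \<le> harm (Suc 0) - ln (real (Suc 0))"
    using decseq_harm_diff_ln unfolding decseq_def by blast
  then show ?thesis
    unfolding \<open>K = Suc k\<close> by (simp add: harm_def divide_inverse)
qed

lemma coprime_if_smooth_rough:
  assumes "1 \<le> s" "s < p" "rough p m"
  shows "coprime s m"
proof (rule coprimeI)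
  fix d
  assume "d dvd s" "d dvd m"
  show "is_unit d"
  proof (rule ccontr)
    assume "\<not> is_unit d"
    then obtain q where "prime q" "q dvd d"
      using prime_factor_nat[of d] by auto
    then have "q \<le> s" "p \<le> q"
      using \<open>d dvd s\<close> \<open>d dvd m\<close> assms dvd_imp_le[of q s] unfolding rough_def by auto
    with assms(2) show False
      by simp
  qed
qed

lemma smooth_times_rough_unique:
  assumes "1 \<le> s" "s < p" "1 \<le> s'" "s' < p" "rough p m" "rough p m'" "s * m = s' * m'"
  shows "s = s' \<and> m = m'"
proof -
  have "s dvd s'"
    using assms(7) coprime_if_smooth_rough[OF assms(1,2,6)]
    by (metis coprime_dvd_mult_left_iff dvd_triv_left)
  moreover have "s' dvd s"
    using assms(7) coprime_if_smooth_rough[OF assms(3,4,5)]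
    by (metis coprime_dvd_mult_left_iff dvd_triv_left)
  ultimately have "s = s'"
    by (rule dvd_antisym)
  with assms(1,7) show ?thesis
    by simp
qed

lemma ln_mult_sum_inverse_rough_le:
  assumes "prime p" "(p - 1) * M \<le> N" "N \<ge> 1"
  shows "ln (real p) * (\<Sum>m\<in>{m. 1 \<le> m \<and> m \<le> M \<and> rough p m}. 1 / real m) \<le> 1 + ln (real N)"
proof -
  define R where "R = {m. 1 \<le> m \<and> m \<le> M \<and> rough p m}"
  have "p > 0"
    using assms(1) by (rule prime_gt_0_nat)
  then have "ln (real p) \<le> harm (p - 1)"
    using ln_le_harm[of "p - 1"] by (simp add: of_nat_diff)
  also have "harm (p - 1) = (\<Sum>s\<in>{1..<p}. 1 / real s)"
    unfolding harm_def using \<open>p > 0\<close> by (intro sum.cong) (auto simp: divide_inverse)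
  finally
  have "ln (real p) * (\<Sum>m\<in>R. 1 / real m) \<le> (\<Sum>s\<in>{1..<p}. 1 / real s) * (\<Sum>m\<in>R. 1 / real m)"
    by (intro mult_right_mono sum_nonneg) auto
  also have "\<dots> = (\<Sum>(s, m)\<in>{1..<p} \<times> R. 1 / real (s * m))"
    by (simp add: sum_product sum.cartesian_product)
  also have "\<dots> = (\<Sum>n\<in>(\<lambda>(s, m). s * m) ` ({1..<p} \<times> R). 1 / real n)"
    using smooth_times_rough_unique[of _ p]
    by (subst sum.reindex) (auto simp: R_def case_prod_beta inj_on_def)
  also have "\<dots> \<le> (\<Sum>n=1..N. 1 / real n)"
  proof (rule sum_mono2)
    show "(\<lambda>(s, m). s * m) ` ({1..<p} \<times> R) \<subseteq> {1..N}"
    proof clarify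
      fix s m
      assume "s \<in> {1..<p}" "m \<in> R"
      then have "s * m \<le> (p - 1) * M" "1 \<le> s * m"
        unfolding R_def by (auto intro: mult_le_mono)
      then show "s * m \<in> {1..N}"
        using assms(2) by simp
    qed
  qed auto
  also have "\<dots> \<le> 1 + ln (real N)"
    using assms(3) by (rule sum_inverse_le_one_plus_ln)
  finally show ?thesis
    unfolding R_def .
qed

lemma sum_inverse_Lmultiples_le:
  assumes \<kappa>: "\<And>p. prime p \<Longrightarrow> \<kappa> \<le> rough_density p * ln (real p)" "\<kappa> > 0"
    and "c \<ge> 1" "N \<ge> 1"
  shows "\<kappa> * (\<Sum>n\<in>{n\<in>Lmultiples c. n \<le> N}. 1 / real n) \<le> weight c * (1 + ln (real N))"
proof -
  define p where "p = top_prime c"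
  define R where "R = {m. 1 \<le> m \<and> m \<le> N div c \<and> rough p m}"
  have "prime p"
    unfolding p_def by (rule prime_top_prime)
  have "p - 1 \<le> c"
    using top_prime_le[of c] \<open>c \<ge> 1\<close> by (cases "c = 1") (auto simp: p_def top_prime_def)
  then have "(p - 1) * (N div c) \<le> c * (N div c)"
    by (rule mult_le_mono1)
  also have "\<dots> \<le> N"
    using div_times_less_eq_dividend[of N c] by (simp add: mult.commute)
  finally have "(p - 1) * (N div c) \<le> N" .
  have "{n\<in>Lmultiples c. n \<le> N} = (\<lambda>m. c * m) ` R"
    using \<open>c \<ge> 1\<close> unfolding Lmultiples_def R_def p_def
    by (auto simp: less_eq_div_iff_mult_less_eq mult.commute)
  then have "(\<Sum>n\<in>{n\<in>Lmultiples c. n \<le> N}. 1 / real n) = (\<Sum>m\<in>R. 1 / real m) / real c"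
    using \<open>c \<ge> 1\<close> by (simp add: sum.reindex inj_on_def sum_divide_distrib mult.commute)
  moreover have "\<kappa> * (\<Sum>m\<in>R. 1 / real m) \<le> rough_density p * ln (real p) * (\<Sum>m\<in>R. 1 / real m)"
    using \<kappa>(1)[OF \<open>prime p\<close>] by (rule mult_right_mono) (simp add: sum_nonneg)
  moreover have "ln (real p) * (\<Sum>m\<in>R. 1 / real m) \<le> 1 + ln (real N)"
    unfolding R_def using \<open>prime p\<close> \<open>(p - 1) * (N div c) \<le> N\<close> \<open>N \<ge> 1\<close>
    by (rule ln_mult_sum_inverse_rough_le)
  ultimately show ?thesis
    using rough_density_pos[of p] \<open>c \<ge> 1\<close> unfolding weight_def p_def[symmetric]
    by (simp add: divide_right_mono mult_left_mono order_trans)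
qed

section \<open>Sets of logarithmic density zero\<close>

definition log_avg :: "nat set \<Rightarrow> real \<Rightarrow> real" where
  "log_avg B x = (1 / ln x) * (\<Sum>n\<in>{n\<in>B. 1 \<le> n \<and> real n \<le> x}. 1 / real n)"

definition log_null :: "nat set \<Rightarrow> bool" where
  "log_null B \<longleftrightarrow> (\<forall>\<epsilon>>0. eventually (\<lambda>x. log_avg B x \<le> \<epsilon>) at_top)"

lemma finite_log_segment: "finite {n\<in>B. 1 \<le> n \<and> real n \<le> x}"
proof (rule finite_subset)
  show "{n\<in>B. 1 \<le> n \<and> real n \<le> x} \<subseteq> {..nat \<lfloor>x\<rfloor>}"
    by (auto simp: le_nat_floor)
qed simp

lemma log_avg_mono: "C \<subseteq> B \<Longrightarrow> x > 1 \<Longrightarrow> log_avg C x \<le> log_avg B x"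
  unfolding log_avg_def
  by (intro mult_left_mono sum_mono2 finite_log_segment) auto

lemma log_avg_Un:
  assumes "x > 1"
  shows "log_avg (B \<union> C) x \<le> log_avg B x + log_avg C x"
proof -
  define SB where "SB = {n\<in>B. 1 \<le> n \<and> real n \<le> x}"
  define SC where "SC = {n\<in>C. 1 \<le> n \<and> real n \<le> x}"
  have "{n\<in>B \<union> C. 1 \<le> n \<and> real n \<le> x} = SB \<union> SC"
    unfolding SB_def SC_def by auto
  moreover have "(\<Sum>n\<in>SB \<union> SC. 1 / real n)
      = (\<Sum>n\<in>SB. 1 / real n) + (\<Sum>n\<in>SC. 1 / real n) - (\<Sum>n\<in>SB \<inter> SC. 1 / real n)"
    unfolding SB_def SC_def by (intro sum_Un finite_log_segment)
  ultimately have "(\<Sum>n\<in>{n\<in>B \<union> C. 1 \<le> n \<and> real n \<le> x}. 1 / real n)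
      \<le> (\<Sum>n\<in>SB. 1 / real n) + (\<Sum>n\<in>SC. 1 / real n)"
    by (simp add: sum_nonneg)
  then show ?thesis
    unfolding log_avg_def SB_def SC_def distrib_left[symmetric] using assms
    by (intro mult_left_mono) auto
qed

lemma log_null_if_small_cover:
  assumes "\<And>\<epsilon>. \<epsilon> > 0 \<Longrightarrow> \<exists>Y U. S \<subseteq> Y \<union> U \<and> log_null Y \<and> eventually (\<lambda>x. log_avg U x \<le> \<epsilon>) at_top"
  shows "log_null S"
  unfolding log_null_def
proof (intro allI impI)
  fix \<epsilon> :: real
  assume "\<epsilon> > 0"
  then obtain Y U where "S \<subseteq> Y \<union> U" "log_null Y" "eventually (\<lambda>x. log_avg U x \<le> \<epsilon> / 2) at_top"
    using assms[of "\<epsilon> / 2"] by auto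
  moreover from \<open>log_null Y\<close> have "eventually (\<lambda>x. log_avg Y x \<le> \<epsilon> / 2) at_top"
    unfolding log_null_def using \<open>\<epsilon> > 0\<close> half_gt_zero by blast
  ultimately have "eventually (\<lambda>x. log_avg Y x \<le> \<epsilon> / 2 \<and> log_avg U x \<le> \<epsilon> / 2 \<and> x > 1) at_top"
    by (intro eventually_conj eventually_gt_at_top)
  then show "eventually (\<lambda>x. log_avg S x \<le> \<epsilon>) at_top"
  proof eventually_elim
    case (elim x)
    then show ?case
      using log_avg_mono[OF \<open>S \<subseteq> Y \<union> U\<close>, of x] log_avg_Un[of x Y U] by linarith
  qed
qed

lemma log_null_Un: "log_null B \<Longrightarrow> log_null C \<Longrightarrow> log_null (B \<union> C)"
  by (rule log_null_if_small_cover) (auto simp: log_null_def)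

lemma log_null_subset:
  assumes "log_null B" "C \<subseteq> B"
  shows "log_null C"
proof (rule log_null_if_small_cover)
  fix \<epsilon> :: real
  assume "\<epsilon> > 0"
  then have "eventually (\<lambda>x. log_avg {} x \<le> \<epsilon>) at_top"
    by (simp add: log_avg_def)
  with assms show "\<exists>Y U. C \<subseteq> Y \<union> U \<and> log_null Y \<and> eventually (\<lambda>x. log_avg U x \<le> \<epsilon>) at_top"
    by blast
qed

lemma log_null_finite:
  assumes "finite B"
  shows "log_null B"
  unfolding log_null_def
proof (intro allI impI)
  fix \<epsilon> :: real
  assume "\<epsilon> > 0"
  define s where "s = (\<Sum>n\<in>B. 1 / real n)"
  have "((\<lambda>x. s / ln x) \<longlongrightarrow> 0) at_top"
    by (intro tendsto_divide_0[OF tendsto_const] filterlim_at_top_imp_at_infinity ln_at_top)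
  then have "eventually (\<lambda>x. s / ln x < \<epsilon> \<and> x > 1) at_top"
    using \<open>\<epsilon> > 0\<close> by (intro eventually_conj order_tendstoD(2) eventually_gt_at_top)
  then show "eventually (\<lambda>x. log_avg B x \<le> \<epsilon>) at_top"
  proof eventually_elim
    case (elim x)
    have "(\<Sum>n\<in>{n\<in>B. 1 \<le> n \<and> real n \<le> x}. 1 / real n) \<le> s"
      unfolding s_def using assms by (intro sum_mono2) auto
    then have "log_avg B x \<le> s / ln x"
      unfolding log_avg_def using elim by (simp add: divide_right_mono)
    with elim show ?case
      by simp
  qed
qed

lemma log_null_UN: "finite Q \<Longrightarrow> (\<And>a. a \<in> Q \<Longrightarrow> log_null (S a)) \<Longrightarrow> log_null (\<Union>a\<in>Q. S a)"
  by (induction Q rule: finite_induct) (auto intro: log_null_Un log_null_finite)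

lemma log_null_diff_finite: "finite S \<Longrightarrow> log_null (B - S) \<Longrightarrow> log_null B"
  using log_null_finite[of S] unfolding log_null_def[of S]
  by (intro log_null_if_small_cover) blast

lemma upper_log_density_eq_Limsup_log_avg:
  "upper_log_density A = Limsup at_top (\<lambda>x. ereal (log_avg A x))"
  unfolding upper_log_density_def log_avg_def ..

lemma not_log_null_if_upper_log_density_pos:
  assumes "upper_log_density A > 0"
  shows "\<not> log_null A"
proof
  assume "log_null A"
  have "upper_log_density A \<le> ereal \<epsilon>" if "\<epsilon> > 0" for \<epsilon>
    unfolding upper_log_density_eq_Limsup_log_avg
    using \<open>log_null A\<close> that unfolding log_null_def by (intro Limsup_bounded) auto
  then have "upper_log_density A \<le> 0"
    using ereal_le_epsilon2[of _ 0] by simp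
  with assms show False
    by simp
qed

section \<open>Descending along L-multiples\<close>

lemma sum_UN_le:
  fixes f :: "'b \<Rightarrow> real"
  assumes "finite G" "\<And>a. a \<in> G \<Longrightarrow> finite (S a)" "\<And>n. f n \<ge> 0"
  shows "sum f (\<Union>a\<in>G. S a) \<le> (\<Sum>a\<in>G. sum f (S a))"
proof -
  have "(\<Union>a\<in>G. S a) = snd ` Sigma G S"
    by force
  then have "sum f (\<Union>a\<in>G. S a) \<le> sum (f \<circ> snd) (Sigma G S)"
    using assms by (simp only:) (rule sum_image_le, auto)
  also have "\<dots> = (\<Sum>a\<in>G. sum f (S a))"
    using assms by (simp add: sum.Sigma comp_def case_prod_beta)
  finally show ?thesis .
qed

definition L_minimal :: "nat set \<Rightarrow> nat set" where
  "L_minimal X = {a\<in>X. \<forall>b\<in>X. a \<in> Lmultiples b \<longrightarrow> a = b}"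

lemma L_antichain_if_subset_L_minimal: "F \<subseteq> L_minimal X \<Longrightarrow> L_antichain F"
  unfolding L_antichain_def L_minimal_def by blast

lemma subset_UN_L_minimal:
  assumes "\<And>b. b \<in> X \<Longrightarrow> b \<ge> 1"
  shows "X \<subseteq> (\<Union>a\<in>L_minimal X. Lmultiples a)"
proof
  fix n
  assume "n \<in> X"
  define a where "a = (LEAST a. a \<in> X \<and> n \<in> Lmultiples a)"
  have a: "a \<in> X \<and> n \<in> Lmultiples a"
    unfolding a_def using \<open>n \<in> X\<close> self_in_Lmultiples by (intro LeastI) blast
  have "a = b" if "b \<in> X" "a \<in> Lmultiples b" for b
  proof (rule ccontr)
    assume "a \<noteq> b"
    with that(2) have "b < a"
      by (rule Lmultiples_less)
    moreover have "n \<in> Lmultiples b"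
      using Lmultiples_trans[OF that(2)] a assms[OF that(1)] by blast
    then have "a \<le> b"
      unfolding a_def using that(1) by (intro Least_le) blast
    ultimately show False
      by simp
  qed
  then show "n \<in> (\<Union>a\<in>L_minimal X. Lmultiples a)"
    using a unfolding L_minimal_def by blast
qed

lemma bounded_finite_sums_small_tail:
  fixes f :: "'a \<Rightarrow> real"
  assumes "\<And>F. finite F \<Longrightarrow> F \<subseteq> H \<Longrightarrow> sum f F \<le> C" "\<delta> > 0"
  obtains Q where "finite Q" "Q \<subseteq> H" "\<And>G. finite G \<Longrightarrow> G \<subseteq> H - Q \<Longrightarrow> sum f G \<le> \<delta>"
proof -
  define totals where "totals = {sum f F | F. finite F \<and> F \<subseteq> H}"
  have "totals \<noteq> {}" "bdd_above totals"
    unfolding totals_def bdd_above_def using assms(1) by blast+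
  then obtain Q where Q: "finite Q" "Q \<subseteq> H" "Sup totals - \<delta> < sum f Q"
    using less_cSup_iff[of totals "Sup totals - \<delta>"] assms(2) unfolding totals_def by auto
  have "sum f G \<le> \<delta>" if "finite G" "G \<subseteq> H - Q" for G
  proof -
    have "sum f (G \<union> Q) \<le> Sup totals"
      using that Q \<open>bdd_above totals\<close> unfolding totals_def by (intro cSup_upper) auto
    moreover have "sum f (G \<union> Q) = sum f G + sum f Q"
      using that Q by (intro sum.union_disjoint) auto
    ultimately show ?thesis
      using Q(3) by linarith
  qed
  with Q show ?thesis
    using that by blast
qed

lemma log_avg_UN_Lmultiples_le:
  assumes \<kappa>: "\<And>p. prime p \<Longrightarrow> \<kappa> \<le> rough_density p * ln (real p)" "\<kappa> > 0"
    and G: "\<And>a. a \<in> G \<Longrightarrow> a \<ge> 1" "\<And>F. finite F \<Longrightarrow> F \<subseteq> G \<Longrightarrow> (\<Sum>a\<in>F. weight a) \<le> \<delta>"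
    and "x \<ge> exp 1"
  shows "\<kappa> * log_avg (\<Union>a\<in>G. Lmultiples a) x \<le> 2 * \<delta>"
proof -
  define N where "N = nat \<lfloor>x\<rfloor>"
  define G' where "G' = {a\<in>G. a \<le> N}"
  have "x \<ge> 2"
    using exp_ge_add_one_self[of 1] \<open>x \<ge> exp 1\<close> by linarith
  then have "N \<ge> 1" "real N \<le> x" "0 < x"
    unfolding N_def by linarith+
  have "ln x \<ge> 1"
    using \<open>x \<ge> exp 1\<close> \<open>0 < x\<close> ln_le_cancel_iff[of "exp 1" x] by simp
  have "0 \<le> \<delta>"
    using G(2)[of "{}"] by simp
  have "{n\<in>(\<Union>a\<in>G. Lmultiples a). 1 \<le> n \<and> real n \<le> x} \<subseteq> (\<Union>a\<in>G'. {n\<in>Lmultiples a. n \<le> N})"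
  proof
    fix n
    assume "n \<in> {n\<in>(\<Union>a\<in>G. Lmultiples a). 1 \<le> n \<and> real n \<le> x}"
    then obtain a where "a \<in> G" "n \<in> Lmultiples a" "real n \<le> x"
      by blast
    moreover from this have "a \<le> n" "n \<le> N"
      unfolding N_def by (auto simp: le_nat_floor dest: Lmultiples_ge)
    ultimately show "n \<in> (\<Union>a\<in>G'. {n\<in>Lmultiples a. n \<le> N})"
      unfolding G'_def by auto
  qed
  then have "\<kappa> * (\<Sum>n\<in>{n\<in>(\<Union>a\<in>G. Lmultiples a). 1 \<le> n \<and> real n \<le> x}. 1 / real n)
      \<le> \<kappa> * (\<Sum>n\<in>(\<Union>a\<in>G'. {n\<in>Lmultiples a. n \<le> N}). 1 / real n)"
    using \<kappa>(2) unfolding G'_def by (intro mult_left_mono sum_mono2) auto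
  also have "\<dots> \<le> (\<Sum>a\<in>G'. \<kappa> * (\<Sum>n\<in>{n\<in>Lmultiples a. n \<le> N}. 1 / real n))"
    unfolding sum_distrib_left[symmetric] using \<kappa>(2) unfolding G'_def
    by (intro mult_left_mono sum_UN_le) auto
  also have "\<dots> \<le> (\<Sum>a\<in>G'. weight a * (1 + ln (real N)))"
    using G(1) \<kappa> \<open>N \<ge> 1\<close> unfolding G'_def by (intro sum_mono sum_inverse_Lmultiples_le) auto
  also have "\<dots> = (1 + ln (real N)) * (\<Sum>a\<in>G'. weight a)"
    by (simp add: sum_distrib_right mult.commute)
  also have "\<dots> \<le> (1 + ln x) * \<delta>"
    using G(2)[of G'] \<open>N \<ge> 1\<close> \<open>real N \<le> x\<close> \<open>0 \<le> \<delta>\<close> weight_nonneg unfolding G'_def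
    by (intro mult_mono) (auto simp: sum_nonneg)
  also have "\<dots> \<le> 2 * \<delta> * ln x"
    using mult_left_mono[OF \<open>ln x \<ge> 1\<close> \<open>0 \<le> \<delta>\<close>] by (simp add: algebra_simps)
  finally show ?thesis
    using \<open>ln x \<ge> 1\<close> unfolding log_avg_def by (simp add: field_simps)
qed

lemma log_null_if_L_minimal_log_null:
  assumes X_pos: "\<And>b. b \<in> X \<Longrightarrow> b \<ge> 1"
    and weights: "\<And>F. finite F \<Longrightarrow> F \<subseteq> L_minimal X \<Longrightarrow> (\<Sum>a\<in>F. weight a) \<le> W"
    and null: "\<And>a. a \<in> L_minimal X \<Longrightarrow> log_null (X \<inter> Lmultiples a)"
  shows "log_null X"
proof (rule log_null_if_small_cover)
  fix \<epsilon> :: real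
  assume "\<epsilon> > 0"
  obtain \<kappa> where \<kappa>: "\<kappa> > 0" "\<And>p. prime p \<Longrightarrow> \<kappa> \<le> rough_density p * ln (real p)"
    using rough_density_ln_lower by blast
  obtain Q where "finite Q" "Q \<subseteq> L_minimal X"
    and tail: "\<And>G. finite G \<Longrightarrow> G \<subseteq> L_minimal X - Q \<Longrightarrow> (\<Sum>a\<in>G. weight a) \<le> \<kappa> * \<epsilon> / 2"
    using bounded_finite_sums_small_tail[OF weights, where \<delta> = "\<kappa> * \<epsilon> / 2"] \<kappa>(1) \<open>\<epsilon> > 0\<close>
    by auto
  define Y where "Y = (\<Union>a\<in>Q. X \<inter> Lmultiples a)"
  define U where "U = (\<Union>a\<in>L_minimal X - Q. Lmultiples a)"
  have "X \<subseteq> Y \<union> U"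
  proof
    fix n
    assume "n \<in> X"
    then obtain a where "a \<in> L_minimal X" "n \<in> Lmultiples a"
      using subset_UN_L_minimal[OF X_pos] by blast
    with \<open>n \<in> X\<close> show "n \<in> Y \<union> U"
      unfolding Y_def U_def by (cases "a \<in> Q") auto
  qed
  moreover have "log_null Y"
    unfolding Y_def using \<open>finite Q\<close> \<open>Q \<subseteq> L_minimal X\<close> null by (intro log_null_UN) auto
  moreover have "eventually (\<lambda>x. log_avg U x \<le> \<epsilon>) at_top"
    using eventually_ge_at_top[of "exp 1"]
  proof eventually_elim
    case (elim x)
    have "L_minimal X \<subseteq> X"
      unfolding L_minimal_def by blast
    then have "\<kappa> * log_avg U x \<le> 2 * (\<kappa> * \<epsilon> / 2)"
      unfolding U_def using \<kappa> X_pos tail elim by (intro log_avg_UN_Lmultiples_le) auto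
    then show ?case
      using \<kappa>(1) by simp
  qed
  ultimately show "\<exists>Y U. X \<subseteq> Y \<union> U \<and> log_null Y \<and> eventually (\<lambda>x. log_avg U x \<le> \<epsilon>) at_top"
    by blast
qed

lemma exists_Lmultiple_not_log_null:
  assumes "c \<ge> 1" "\<not> log_null (B \<inter> Lmultiples c)"
  shows "\<exists>a\<in>B \<inter> Lmultiples c. a \<noteq> c \<and> \<not> log_null (B \<inter> Lmultiples a)"
proof (rule ccontr)
  assume no_such: "\<not> ?thesis"
  define X where "X = B \<inter> Lmultiples c - {c}"
  have X_pos: "b \<ge> 1" if "b \<in> X" for b
    using that assms(1) Lmultiples_ge[of b c] unfolding X_def by simp
  have "log_null X"
  proof (rule log_null_if_L_minimal_log_null[OF X_pos])
    show "(\<Sum>a\<in>F. weight a) \<le> weight c" if "finite F" "F \<subseteq> L_minimal X" for F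
      using assms(1) that L_antichain_if_subset_L_minimal[OF that(2)]
      by (intro sum_weight_L_antichain_le) (auto simp: L_minimal_def X_def)
    show "log_null (X \<inter> Lmultiples a)" if "a \<in> L_minimal X" for a
      using that no_such unfolding L_minimal_def X_def
      by (auto intro: log_null_subset)
  qed
  then have "log_null ({c} \<union> X)"
    using log_null_Un[OF log_null_finite[of "{c}"]] by simp
  then have "log_null (B \<inter> Lmultiples c)"
    by (rule log_null_subset) (auto simp: X_def)
  with assms(2) show False
    by contradiction
qed

lemma L_chain_if_Lmultiples:
  assumes "\<And>j. d j > 1" "\<And>j. d (Suc j) \<in> Lmultiples (d j)" "\<And>j. d (Suc j) \<noteq> d j"
  shows "L_chain d"
  unfolding L_chain_def
proof (intro conjI allI)
  show "1 < d 0"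
    by (rule assms(1))
  show "strict_mono d"
    using assms(2,3) Lmultiples_less by (intro strict_mono_Suc_iff[THEN iffD2] allI) blast
  show "d (Suc j) \<in> Lmult (d j)" for j
    using assms(1,2) Lmultiples_eq_Lmult by blast
qed

lemma exists_L_chain_from:
  assumes "\<And>b. b \<in> B \<Longrightarrow> b > 1" "a \<in> B" "\<not> log_null (B \<inter> Lmultiples a)"
  shows "\<exists>d. L_chain d \<and> range d \<subseteq> B"
proof -
  have "\<exists>b. (b \<in> B \<and> \<not> log_null (B \<inter> Lmultiples b)) \<and> b \<in> Lmultiples a \<and> b \<noteq> a"
    if "a \<in> B" "\<not> log_null (B \<inter> Lmultiples a)" for a
    using exists_Lmultiple_not_log_null[OF _ that(2)] that(1) assms(1) by fastforce
  then obtain d where d: "\<And>j. d j \<in> B" "\<And>j. d (Suc j) \<in> Lmultiples (d j) \<and> d (Suc j) \<noteq> d j"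
    using assms(2,3) dependent_nat_choice[where P = "\<lambda>_ a. a \<in> B \<and> \<not> log_null (B \<inter> Lmultiples a)"
        and Q = "\<lambda>_ a b. b \<in> Lmultiples a \<and> b \<noteq> a"] by blast
  then have "L_chain d"
    using assms(1) by (intro L_chain_if_Lmultiples) auto
  with d(1) show ?thesis
    by blast
qed

theorem theorem1p8:
  fixes A :: "nat set"
  assumes "upper_log_density A > 0"
  shows "\<exists>d. L_chain d \<and> range d \<subseteq> A"
proof -
  define A' where "A' = A - {0, 1}"
  have "\<not> log_null A'"
    using not_log_null_if_upper_log_density_pos[OF assms] log_null_diff_finite[of "{0, 1}" A]
    unfolding A'_def by auto
  moreover have "A' \<inter> Lmultiples 1 = A'"
    unfolding A'_def Lmultiples_one by auto
  ultimately obtain a where "a \<in> A'" "\<not> log_null (A' \<inter> Lmultiples a)"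
    using exists_Lmultiple_not_log_null[of 1 A'] by auto
  then have "\<exists>d. L_chain d \<and> range d \<subseteq> A'"
    by (intro exists_L_chain_from) (auto simp: A'_def)
  then show ?thesis
    unfolding A'_def by blast
qed

end
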